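(* Let $\mathcal{C}$ be an $[n,k]_q$ MWS code with $k\ge 2$. Then $$n\ge\left\lceil\frac{q\,\theta_q(k-1)}{2}\right\rceil=\left\lceil\frac{q^{k+1}-q}{2(q-1)}\right\rceil=\left\lceil\tfrac12\left(q^k+q^{k-1}+\dots+q\right)\right\rceil.$$
   Context: An $[n,k]_q$ code is a $k$-dimensional subspace of $\mathbb{F}_q^n$, non-degenerate (no coordinate identically zero on the code). $\theta_q(k-1)=\frac{q^k-1}{q-1}$. The code is MWS if the set of its non-zero Hamming weights has cardinality $\theta_q(k-1)$. *)

theory Defs
  imports "HOL-Analysis.Analysis"
begin

text \<open>Codes of length n over the finite field 'a (q = CARD('a)) are subsets of
  'a ^ 'n, where the coordinate index type 'n has n = CARD('n) elements.\<close>

definition theta :: "nat \<Rightarrow> nat \<Rightarrow> nat" where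
  "theta q m = (q ^ (m + 1) - 1) div (q - 1)"

definition hamming_wt :: "'a::zero ^ 'n \<Rightarrow> nat" where
  "hamming_wt x = card {i. x $ i \<noteq> 0}"

definition linear_code :: "('a::field ^ 'n) set \<Rightarrow> nat \<Rightarrow> bool" where
  "linear_code C k \<longleftrightarrow> vec.subspace C \<and> vec.dim C = k"

definition nondegenerate :: "('a::zero ^ 'n) set \<Rightarrow> bool" where
  "nondegenerate C \<longleftrightarrow> (\<forall>i. \<exists>x\<in>C. x $ i \<noteq> 0)"

definition MWS :: "('a::{field,finite} ^ 'n) set \<Rightarrow> nat \<Rightarrow> bool" where
  "MWS C k \<longleftrightarrow> card {hamming_wt x | x. x \<in> C \<and> x \<noteq> 0} = theta CARD('a) (k - 1)"

end

theory Submission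
  imports Defs
begin

(* A codeword and its q - 1 nonzero multiples have the same weight. In an MWS code the
   q^k - 1 = (q - 1) \<theta> nonzero codewords realise \<theta> = \<theta>_q(k - 1) distinct weights, so every
   weight is carried by exactly q - 1 codewords. Counting nonzero entries coordinate by
   coordinate (each coordinate of a nondegenerate code is nonzero in (q - 1) q^(k-1)
   codewords) shows that the distinct weights sum to n q^(k-1). The \<theta> distinct numbers
   n - w are nonnegative, so they sum to at least \<theta>(\<theta> - 1)/2, while their sum is
   \<theta> n - n q^(k-1) = n (\<theta> - 1)/q; hence n \<ge> q \<theta> / 2. *)

lemma pred_mult_theta: "(q - 1) * theta q m = q ^ (m + 1) - 1"
proof (cases "q = 0")
  case False
  have "int (q ^ (m + 1) - 1) = int (q - 1) * (\<Sum>i<m + 1. int q ^ i)"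
    using False power_diff_1_eq[of "int q" "m + 1"] by (simp add: of_nat_diff)
  then have "(q - 1) dvd q ^ (m + 1) - 1"
    by (metis dvd_triv_left int_dvd_int_iff)
  then show ?thesis by (simp add: theta_def)
qed (simp add: theta_def)

lemma two_le_theta:
  assumes "q \<ge> 2" and "m \<ge> 1"
  shows "theta q m \<ge> 2"
proof (rule ccontr)
  assume "\<not> theta q m \<ge> 2"
  then have "q ^ (m + 1) - 1 \<le> q - 1"
    using pred_mult_theta[of q m] mult_le_mono2[of "theta q m" 1 "q - 1"] by simp
  moreover have "q * q \<le> q ^ (m + 1)"
    using power_increasing[of 2 "m + 1" q] assms by (simp add: power2_eq_square)
  ultimately show False
    using \<open>q \<ge> 2\<close> mult_le_mono1[of 2 q q] by linarith
qed

lemma two_le_card_field: "CARD('a::{field,finite}) \<ge> 2"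
proof -
  have "card {0::'a, 1} \<le> CARD('a)"
    by (rule card_mono) auto
  then show ?thesis by simp
qed

lemma card_span_insert:
  fixes U :: "('a::{field,finite} ^ 'n) set"
  assumes U: "vec.subspace U" and b: "b \<notin> U"
  shows "card (vec.span (insert b U)) = CARD('a) * card U"
proof -
  let ?f = "\<lambda>(u, c). u + c *s b"
  have "u = v \<and> c = d" if "u \<in> U" "v \<in> U" "u + c *s b = v + d *s b" for u v c d
  proof -
    have "c = d"
    proof (rule ccontr)
      assume "c \<noteq> d"
      from that(3) have "(c - d) *s b = v - u"
        by (simp add: algebra_simps vec.scale_left_diff_distrib)
      then have "b = inverse (c - d) *s (v - u)"
        using \<open>c \<noteq> d\<close> by (metis vec.scale_scale left_inverse right_minus_eq vec.scale_one)
      then show False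
        using b U that(1,2) by (simp add: vec.subspace_diff vec.subspace_scale)
    qed
    with that(3) show ?thesis by simp
  qed
  then have "inj_on ?f (U \<times> UNIV)"
    by (clarsimp simp: inj_on_def)
  moreover have "?f ` (U \<times> UNIV) = vec.span (insert b U)"
  proof -
    have "vec.span (insert b U) = {x. \<exists>c. x - c *s b \<in> U}"
      using U by (simp add: vec.span_insert vec.span_eq_iff[THEN iffD2])
    moreover have "x \<in> ?f ` (U \<times> UNIV)" if "x - c *s b \<in> U" for x c
      using that by (intro rev_image_eqI[of "(x - c *s b, c)"]) auto
    moreover have "?f (u, c) - c *s b \<in> U" if "u \<in> U" for u c
      using that by simp
    ultimately show ?thesis by blast
  qed
  ultimately have "card (vec.span (insert b U)) = card (U \<times> (UNIV :: 'a set))"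
    by (metis card_image)
  then show ?thesis by (simp add: card_cartesian_product)
qed

lemma card_span_independent:
  fixes B :: "('a::{field,finite} ^ 'n) set"
  assumes "vec.independent B"
  shows "card (vec.span B) = CARD('a) ^ card B"
proof -
  have "finite B" by simp
  then show ?thesis using assms
  proof (induction B rule: finite_induct)
    case empty
    then show ?case by simp
  next
    case (insert b B)
    then have "vec.independent B" and "b \<notin> vec.span B"
      using vec.independent_insert[of b B] by auto
    moreover have "vec.span (insert b B) = vec.span (insert b (vec.span B))"
      by (simp add: vec.span_insert vec.span_span)
    ultimately show ?case
      using insert.IH insert.hyps card_span_insert[of "vec.span B" b] by simp
  qed
qed

lemma card_subspace:
  fixes C :: "('a::{field,finite} ^ 'n) set"
  assumes "vec.subspace C"
  shows "card C = CARD('a) ^ vec.dim C"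
proof -
  obtain B where B: "B \<subseteq> C" "vec.independent B" "C \<subseteq> vec.span B" "card B = vec.dim C"
    by (rule vec.basis_exists)
  then have "vec.span B = C"
    using vec.span_subspace assms by blast
  then show ?thesis
    using card_span_independent B by metis
qed

lemma card_subspace_eq_card_coordinate_kernel:
  fixes C :: "('a::{field,finite} ^ 'n) set"
  assumes C: "vec.subspace C" and e: "e \<in> C" "e $ i \<noteq> 0"
  shows "card C = CARD('a) * card {x \<in> C. x $ i = 0}"
proof -
  let ?U = "{x \<in> C. x $ i = 0}"
  have U: "vec.subspace ?U"
    using C by (auto simp: vec.subspace_def)
  have "vec.span (insert e ?U) = C"
  proof
    show "vec.span (insert e ?U) \<subseteq> C"
      using C e by (intro vec.span_minimal) auto
    show "C \<subseteq> vec.span (insert e ?U)"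
    proof
      fix x assume "x \<in> C"
      then have "x - (x $ i / e $ i) *s e \<in> ?U"
        using C e by (simp add: vec.subspace_diff vec.subspace_scale)
      then show "x \<in> vec.span (insert e ?U)"
        unfolding vec.span_insert by (blast intro: vec.span_base)
    qed
  qed
  moreover have "e \<notin> ?U"
    using e by simp
  ultimately show ?thesis
    using card_span_insert[OF U, of e] by simp
qed

lemma card_coordinate_support:
  fixes C :: "('a::{field,finite} ^ 'n) set"
  assumes C: "vec.subspace C" and "\<exists>x\<in>C. x $ i \<noteq> 0"
  shows "CARD('a) * card {x \<in> C. x $ i \<noteq> 0} = (CARD('a) - 1) * card C"
proof -
  let ?a = "card {x \<in> C. x $ i = 0}" and ?b = "card {x \<in> C. x $ i \<noteq> 0}"
  have "card C = card ({x \<in> C. x $ i = 0} \<union> {x \<in> C. x $ i \<noteq> 0})"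
    by (rule arg_cong[where f = card]) auto
  also have "\<dots> = ?a + ?b"
    by (rule card_Un_disjoint) auto
  finally have "card C = ?a + ?b" .
  moreover have "card C = CARD('a) * ?a"
    using assms card_subspace_eq_card_coordinate_kernel by blast
  ultimately show ?thesis
    by (simp add: diff_mult_distrib diff_mult_distrib2 algebra_simps)
qed

lemma sum_hamming_wt_eq_sum_card_support:
  fixes C :: "('a::zero ^ 'n) set"
  assumes "finite C"
  shows "(\<Sum>x\<in>C. hamming_wt x) = (\<Sum>i\<in>UNIV. card {x \<in> C. x $ i \<noteq> 0})"
proof -
  have "(\<Sum>x\<in>C. hamming_wt x) = (\<Sum>x\<in>C. \<Sum>i\<in>{i. i \<in> UNIV \<and> x $ i \<noteq> 0}. 1::nat)"
    by (simp add: hamming_wt_def)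
  also have "\<dots> = (\<Sum>i\<in>UNIV. \<Sum>x\<in>{x. x \<in> C \<and> x $ i \<noteq> 0}. 1::nat)"
    using assms by (rule sum.swap_restrict) simp
  finally show ?thesis by simp
qed

lemma sum_hamming_wt_nondegenerate:
  fixes C :: "('a::{field,finite} ^ 'n) set"
  assumes "vec.subspace C" and "nondegenerate C"
  shows "CARD('a) * (\<Sum>x\<in>C. hamming_wt x) = CARD('n) * ((CARD('a) - 1) * card C)"
  using assms
  by (simp add: sum_hamming_wt_eq_sum_card_support sum_distrib_left card_coordinate_support
      nondegenerate_def)

definition nonzero_weights :: "('a::zero ^ 'n) set \<Rightarrow> nat set" where
  "nonzero_weights C = hamming_wt ` (C - {0})"

lemma MWS_iff_card_nonzero_weights:
  fixes C :: "('a::{field,finite} ^ 'n) set"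
  shows "MWS C k \<longleftrightarrow> card (nonzero_weights C) = theta CARD('a) (k - 1)"
proof -
  have "{hamming_wt x | x. x \<in> C \<and> x \<noteq> 0} = nonzero_weights C"
    unfolding nonzero_weights_def by blast
  then show ?thesis by (simp add: MWS_def)
qed

lemma nonzero_weights_subset: "nonzero_weights C \<subseteq> {..CARD('n)}"
  for C :: "('a::zero ^ 'n) set"
  by (auto simp: nonzero_weights_def hamming_wt_def card_mono)

lemma card_weight_class_ge:
  fixes C :: "('a::{field,finite} ^ 'n) set"
  assumes C: "vec.subspace C" and x: "x \<in> C" "x \<noteq> 0"
  shows "CARD('a) - 1 \<le> card {y \<in> C - {0}. hamming_wt y = hamming_wt x}"
proof -
  have "hamming_wt (c *s x) = hamming_wt x" if "c \<noteq> 0" for c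
    using that by (simp add: hamming_wt_def)
  then have sub: "(\<lambda>c. c *s x) ` (UNIV - {0}) \<subseteq> {y \<in> C - {0}. hamming_wt y = hamming_wt x}"
    using C x by (auto simp: vec.subspace_scale)
  have "inj_on (\<lambda>c. c *s x) (UNIV - {0})"
    using x by (auto simp: inj_on_def)
  then have "CARD('a) - 1 = card ((\<lambda>c. c *s x) ` (UNIV - {0}))"
    by (simp add: card_image card_Diff_singleton)
  also have "\<dots> \<le> card {y \<in> C - {0}. hamming_wt y = hamming_wt x}"
    by (rule card_mono[OF _ sub]) simp
  finally show ?thesis .
qed

lemma MWS_card_weight_class:
  fixes C :: "('a::{field,finite} ^ 'n) set"
  assumes code: "linear_code C k" and "MWS C k" and "k \<ge> 1" and w: "w \<in> nonzero_weights C"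
  shows "card {x \<in> C - {0}. hamming_wt x = w} = CARD('a) - 1"
proof -
  let ?W = "nonzero_weights C" and ?class = "\<lambda>w. card {x \<in> C - {0}. hamming_wt x = w}"
  have C: "vec.subspace C" and "vec.dim C = k"
    using code by (auto simp: linear_code_def)
  have "(\<Sum>v\<in>?W. CARD('a) - 1) = CARD('a) ^ k - 1"
    using pred_mult_theta[of "CARD('a)" "k - 1"] \<open>k \<ge> 1\<close> \<open>MWS C k\<close>
    by (simp add: MWS_iff_card_nonzero_weights mult.commute)
  also have "\<dots> = card (C - {0})"
    using card_subspace[OF C] \<open>vec.dim C = k\<close> vec.subspace_0[OF C] by simp
  also have "\<dots> = (\<Sum>v\<in>?W. ?class v)"
    unfolding nonzero_weights_def using sum.image_gen[of "C - {0}" "\<lambda>_. 1::nat" hamming_wt] by simp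
  finally have "(\<Sum>v\<in>?W. CARD('a) - 1) = (\<Sum>v\<in>?W. ?class v)" .
  moreover have "CARD('a) - 1 \<le> ?class v" if "v \<in> ?W" for v
    using that card_weight_class_ge[OF C] by (auto simp: nonzero_weights_def)
  ultimately show ?thesis
    using sum_mono_inv[of "\<lambda>_. CARD('a) - 1" ?W ?class w] w by (simp add: nonzero_weights_def)
qed

lemma MWS_sum_hamming_wt:
  fixes C :: "('a::{field,finite} ^ 'n) set"
  assumes "linear_code C k" and "MWS C k" and "k \<ge> 1"
  shows "(\<Sum>x\<in>C. hamming_wt x) = (CARD('a) - 1) * \<Sum>(nonzero_weights C)"
proof -
  have "(\<Sum>x\<in>C. hamming_wt x) = (\<Sum>x\<in>C - {0}. hamming_wt x)"
    by (rule sum.mono_neutral_right) (auto simp: hamming_wt_def)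
  also have "\<dots> = (\<Sum>w\<in>nonzero_weights C. \<Sum>x\<in>{x \<in> C - {0}. hamming_wt x = w}. hamming_wt x)"
    unfolding nonzero_weights_def by (rule sum.image_gen) simp
  also have "\<dots> = (\<Sum>w\<in>nonzero_weights C. (CARD('a) - 1) * w)"
    using MWS_card_weight_class[OF assms] by (intro sum.cong) auto
  finally show ?thesis
    by (simp add: sum_distrib_left)
qed

lemma MWS_sum_nonzero_weights:
  fixes C :: "('a::{field,finite} ^ 'n) set"
  assumes code: "linear_code C k" and "nondegenerate C" and "MWS C k" and "k \<ge> 1"
  shows "CARD('a) * \<Sum>(nonzero_weights C) = CARD('n) * CARD('a) ^ k"
proof -
  have C: "vec.subspace C" and "vec.dim C = k"
    using code by (auto simp: linear_code_def)
  then have "(CARD('a) - 1) * (CARD('a) * \<Sum>(nonzero_weights C))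
      = (CARD('a) - 1) * (CARD('n) * CARD('a) ^ k)"
    using sum_hamming_wt_nondegenerate[OF C \<open>nondegenerate C\<close>] MWS_sum_hamming_wt[OF assms(1,3,4)]
      card_subspace[OF C]
    by (simp add: ac_simps)
  then show ?thesis
    using two_le_card_field[where 'a = 'a] by simp
qed

lemma card_mult_pred_le_double_sum:
  fixes S :: "nat set"
  assumes "finite S"
  shows "card S * (card S - 1) \<le> 2 * \<Sum>S"
  using assms
proof (induction "card S" arbitrary: S)
  case 0
  then show ?case by simp
next
  case (Suc c)
  define m where "m = Max S"
  have "S \<noteq> {}"
    using Suc.hyps(2) by auto
  then have m: "m \<in> S" and "S \<subseteq> {..m}"
    using Suc.prems by (auto simp: m_def)
  then have "c \<le> m"
    using card_mono[of "{..m}" S] Suc.hyps(2) by simp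
  have "card (S - {m}) = c"
    using Suc.hyps(2) Suc.prems m by simp
  then have "c * (c - 1) \<le> 2 * \<Sum>(S - {m})"
    using Suc.hyps(1)[of "S - {m}"] Suc.prems by simp
  moreover have "\<Sum>S = m + \<Sum>(S - {m})"
    using Suc.prems m by (simp add: sum.remove)
  ultimately show ?case
    using \<open>c \<le> m\<close> Suc.hyps(2)[symmetric] by (cases c) (auto simp: algebra_simps)
qed

lemma card_mult_pred_le_double_sum_complements:
  fixes W :: "nat set"
  assumes "finite W" and "W \<subseteq> {..n}"
  shows "card W * (card W - 1) \<le> 2 * (card W * n - \<Sum>W)"
proof -
  have "inj_on (\<lambda>w. n - w) W"
    using assms(2) unfolding inj_on_def by (metis atMost_iff diff_diff_cancel subsetD)
  moreover have "(\<Sum>w\<in>W. n - w) = card W * n - \<Sum>W"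
    using assms(2) by (subst sum_subtractf_nat) auto
  ultimately show ?thesis
    using card_mult_pred_le_double_sum[of "(\<lambda>w. n - w) ` W"] assms(1)
    by (simp add: card_image sum.reindex)
qed

lemma length_bound_from_weights:
  fixes W :: "nat set"
  assumes "W \<subseteq> {..n}" and "q \<ge> 1" and "card W \<ge> 2"
    and sum_W: "q * \<Sum>W = n * q ^ k" and card_W: "(q - 1) * card W = q ^ k - 1"
  shows "q * card W \<le> 2 * n"
proof -
  let ?t = "card W"
  have "finite W"
    using assms(1) finite_subset by blast
  have "q * ?t - ?t = q ^ k - 1"
    using card_W by (simp add: diff_mult_distrib)
  moreover have "?t \<le> q * ?t" and "1 \<le> q ^ k"
    using \<open>q \<ge> 1\<close> by simp_all
  ultimately have qt: "q * ?t - q ^ k = ?t - 1"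
    by linarith
  have "q * (?t * n - \<Sum>W) = n * (q * ?t) - q * \<Sum>W"
    by (simp add: diff_mult_distrib2 ac_simps)
  also have "\<dots> = n * (q * ?t - q ^ k)"
    using sum_W by (simp add: diff_mult_distrib2)
  finally have complements: "q * (?t * n - \<Sum>W) = n * (?t - 1)"
    using qt by simp
  have "q * ?t * (?t - 1) \<le> q * (2 * (?t * n - \<Sum>W))"
    using mult_le_mono2[OF card_mult_pred_le_double_sum_complements[OF \<open>finite W\<close> assms(1)]]
    by (simp only: mult.assoc)
  also have "\<dots> = 2 * n * (?t - 1)"
    using complements by simp
  finally show ?thesis
    using \<open>card W \<ge> 2\<close> mult_le_cancel2[of "q * ?t" "?t - 1" "2 * n"] by simp
qed

theorem mainTheorem10:
  fixes C :: "('a::{field,finite} ^ 'n) set" and k :: nat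
  assumes "linear_code C k" and "nondegenerate C" and "MWS C k" and "k \<ge> 2"
  shows "real CARD('n) \<ge> of_int \<lceil>real CARD('a) * real (theta CARD('a) (k - 1)) / 2\<rceil>"
proof -
  define q n t where "q = CARD('a)" and "n = CARD('n)" and "t = theta q (k - 1)"
  have "q \<ge> 2"
    using two_le_card_field by (simp add: q_def)
  have card_W: "card (nonzero_weights C) = t"
    using assms(3) by (simp add: MWS_iff_card_nonzero_weights t_def q_def)
  have "q * card (nonzero_weights C) \<le> 2 * n"
  proof (rule length_bound_from_weights)
    show "nonzero_weights C \<subseteq> {..n}"
      using nonzero_weights_subset by (simp add: n_def)
    show "card (nonzero_weights C) \<ge> 2"
      using two_le_theta[OF \<open>q \<ge> 2\<close>, of "k - 1"] assms(4) card_W by (simp add: t_def)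
    show "q * \<Sum>(nonzero_weights C) = n * q ^ k"
      using MWS_sum_nonzero_weights[OF assms(1-3)] assms(4) by (simp add: q_def n_def)
    show "(q - 1) * card (nonzero_weights C) = q ^ k - 1"
      using pred_mult_theta[of q "k - 1"] assms(4) card_W by (simp add: t_def)
  qed (use \<open>q \<ge> 2\<close> in simp)
  then have "q * t \<le> 2 * n"
    using card_W by simp
  then have "real q * real t / 2 \<le> real n"
    by (simp add: field_simps flip: of_nat_mult)
  then have "\<lceil>real q * real t / 2\<rceil> \<le> int n"
    by (simp add: ceiling_le_iff)
  then show ?thesis
    by (simp add: q_def n_def t_def)
qed

end
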